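(* Let $H$ be a complex reductive group, let $V$ be a finite-dimensional $H$-module and let $v\in V$. The following are equivalent: (1) the span of $Hv$ is $V$; (2) there is no nontrivial one-parameter subgroup of $S:=\operatorname{GL}(V)^H$ which fixes $v$; (3) $v$ is generic.
   Context: Let $V=\bigoplus_{i=1}^k n_iV_i$ be the isotypic decomposition, $V_i$ pairwise non-isomorphic irreducible $H$-modules. Then $\operatorname{GL}(V)^H$ (the $H$-equivariant invertible linear maps) is $\operatorname{GL}(n_1)\times\dots\times\operatorname{GL}(n_k)$. Write $v=(v_{ij})$ with $v_{ij}$ in the $j$th copy of $V_i$ (identified with $V_i$), $j=1,\dots,n_i$. Let $U_i\subset V_i$ be the span of $v_{i1},\dots,v_{in_i}$. The vector $v$ is called generic if $\dim U_i=n_i$ for all $i$. *)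

theory Defs
  imports "HOL-Analysis.Analysis" "HOL-Algebra.Group"
begin

text \<open>V is modelled as complex^'n (a finite-dimensional complex vector space of dimension
CARD('n)); linear endomorphisms are matrices complex^'n^'n; complex-linear notions
(span, subspace, dim) are those of the interpretation vec (scalar multiplication *s).\<close>

definition representation :: "('g, 'b) monoid_scheme \<Rightarrow> ('g \<Rightarrow> complex^'n^'n) \<Rightarrow> bool" where
  "representation G \<rho> \<longleftrightarrow> group G \<and>
     (\<forall>g\<in>carrier G. invertible (\<rho> g)) \<and>
     \<rho> \<one>\<^bsub>G\<^esub> = mat 1 \<and>
     (\<forall>g\<in>carrier G. \<forall>h\<in>carrier G. \<rho> (g \<otimes>\<^bsub>G\<^esub> h) = \<rho> g ** \<rho> h)"

definition invariant_subspace :: "('g, 'b) monoid_scheme \<Rightarrow> ('g \<Rightarrow> complex^'n^'n) \<Rightarrow> (complex^'n) set \<Rightarrow> bool" where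
  "invariant_subspace G \<rho> W \<longleftrightarrow> vec.subspace W \<and> (\<forall>g\<in>carrier G. \<forall>w\<in>W. \<rho> g *v w \<in> W)"

text \<open>Complete reducibility of V (every submodule has an invariant complement); this is the
property of modules of complex reductive groups that stands in for reductivity.\<close>
definition completely_reducible :: "('g, 'b) monoid_scheme \<Rightarrow> ('g \<Rightarrow> complex^'n^'n) \<Rightarrow> bool" where
  "completely_reducible G \<rho> \<longleftrightarrow>
     (\<forall>W. invariant_subspace G \<rho> W \<longrightarrow>
        (\<exists>W'. invariant_subspace G \<rho> W' \<and> W \<inter> W' = {0} \<and> {w + w' | w w'. w \<in> W \<and> w' \<in> W'} = UNIV))"

definition irreducible_submodule :: "('g, 'b) monoid_scheme \<Rightarrow> ('g \<Rightarrow> complex^'n^'n) \<Rightarrow> (complex^'n) set \<Rightarrow> bool" where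
  "irreducible_submodule G \<rho> W \<longleftrightarrow> invariant_subspace G \<rho> W \<and> W \<noteq> {0} \<and>
     (\<forall>W'. invariant_subspace G \<rho> W' \<and> W' \<subseteq> W \<longrightarrow> W' = {0} \<or> W' = W)"

definition module_iso :: "('g, 'b) monoid_scheme \<Rightarrow> ('g \<Rightarrow> complex^'n^'n) \<Rightarrow> (complex^'n \<Rightarrow> complex^'n) \<Rightarrow> (complex^'n) set \<Rightarrow> (complex^'n) set \<Rightarrow> bool" where
  "module_iso G \<rho> f W1 W2 \<longleftrightarrow> bij_betw f W1 W2 \<and>
     (\<forall>x\<in>W1. \<forall>y\<in>W1. f (x + y) = f x + f y) \<and>
     (\<forall>c. \<forall>x\<in>W1. f (c *s x) = c *s f x) \<and>
     (\<forall>g\<in>carrier G. \<forall>x\<in>W1. f (\<rho> g *v x) = \<rho> g *v f x)"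

text \<open>An isotypic decomposition V = \<Oplus>_{i<k} n_i V_i, realised inside V: W i j (i<k, j<n i) is the
j-th copy of the i-th irreducible type, V_i is identified with the copy W i 0, and
\<phi> i j : W i 0 \<rightarrow> W i j is the chosen identification of the j-th copy with V_i.\<close>
definition isotypic_decomposition ::
  "('g, 'b) monoid_scheme \<Rightarrow> ('g \<Rightarrow> complex^'n^'n) \<Rightarrow> nat \<Rightarrow> (nat \<Rightarrow> nat) \<Rightarrow>
   (nat \<Rightarrow> nat \<Rightarrow> (complex^'n) set) \<Rightarrow> (nat \<Rightarrow> nat \<Rightarrow> complex^'n \<Rightarrow> complex^'n) \<Rightarrow> bool" where
  "isotypic_decomposition G \<rho> k n W \<phi> \<longleftrightarrow>
     (\<forall>i<k. 0 < n i) \<and>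
     (\<forall>i<k. \<forall>j<n i. irreducible_submodule G \<rho> (W i j)) \<and>
     (\<forall>i<k. \<forall>j<n i. module_iso G \<rho> (\<phi> i j) (W i 0) (W i j)) \<and>
     (\<forall>i<k. \<forall>i'<k. i \<noteq> i' \<longrightarrow> \<not> (\<exists>f. module_iso G \<rho> f (W i 0) (W i' 0))) \<and>
     (\<forall>x. \<exists>!c. (\<forall>i j. (i < k \<and> j < n i \<longrightarrow> c i j \<in> W i j) \<and> (\<not> (i < k \<and> j < n i) \<longrightarrow> c i j = 0)) \<and>
              x = (\<Sum>(i,j)\<in>Sigma {..<k} (\<lambda>i. {..<n i}). c i j))"

text \<open>v is generic w.r.t. the decomposition: writing v = \<Sum> v'_{ij} with v'_{ij} in the j-th copy
and v_{ij} = \<phi> i j ^{-1} v'_{ij} in V_i, the span U_i of v_{i0},...,v_{i,n_i-1} has dimension n_i.\<close>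
definition generic ::
  "nat \<Rightarrow> (nat \<Rightarrow> nat) \<Rightarrow> (nat \<Rightarrow> nat \<Rightarrow> (complex^'n) set) \<Rightarrow> (nat \<Rightarrow> nat \<Rightarrow> complex^'n \<Rightarrow> complex^'n) \<Rightarrow>
   complex^'n \<Rightarrow> bool" where
  "generic k n W \<phi> v \<longleftrightarrow>
     (\<exists>c. (\<forall>i<k. \<forall>j<n i. c i j \<in> W i j) \<and>
          v = (\<Sum>(i,j)\<in>Sigma {..<k} (\<lambda>i. {..<n i}). c i j) \<and>
          (\<forall>i<k. vec.dim (vec.span ((\<lambda>j. inv_into (W i 0) (\<phi> i j) (c i j)) ` {..<n i})) = n i))"

text \<open>Regular functions on C^*: Laurent polynomials.\<close>
definition laurent_poly_fun :: "(complex \<Rightarrow> complex) \<Rightarrow> bool" where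
  "laurent_poly_fun f \<longleftrightarrow> (\<exists>a :: int \<Rightarrow> complex. \<exists>N :: int.
      \<forall>t. t \<noteq> 0 \<longrightarrow> f t = (\<Sum>m\<in>{-N..N}. a m * t powi m))"

text \<open>One-parameter subgroup of GL(V): a morphism of algebraic groups C^* \<rightarrow> GL(V)
(only its values on nonzero t matter).\<close>
definition one_param_subgroup :: "(complex \<Rightarrow> complex^'n^'n) \<Rightarrow> bool" where
  "one_param_subgroup L \<longleftrightarrow>
     (\<forall>t. t \<noteq> 0 \<longrightarrow> invertible (L t)) \<and>
     (\<forall>s t. s \<noteq> 0 \<longrightarrow> t \<noteq> 0 \<longrightarrow> L (s * t) = L s ** L t) \<and>
     (\<forall>a b. laurent_poly_fun (\<lambda>t. L t $ a $ b))"

end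

theory Submission
  imports Defs "HOL-Computational_Algebra.Fundamental_Theorem_Algebra"
begin

text \<open>
  Both (1) and (3) are compared with (2) through equivariant endomorphisms annihilating \<open>v\<close>.
  A nontrivial one-parameter subgroup \<open>L\<close> of \<open>S\<close> fixing \<open>v\<close> yields the nonzero equivariant
  endomorphism \<open>L t - 1\<close> killing \<open>v\<close>; conversely a nonzero equivariant idempotent \<open>D\<close> with
  \<open>D v = 0\<close> yields the one-parameter subgroup \<open>t \<mapsto> (1 - D) + t D\<close>.
  If \<open>Hv\<close> spans \<open>V\<close>, an equivariant endomorphism killing \<open>v\<close> kills \<open>V\<close>; otherwise the projection
  along an invariant complement of \<open>span (Hv)\<close> is such an idempotent.
  By Schur's lemma an equivariant endomorphism maps the copy \<open>(i, b)\<close> to the copy \<open>(i, j)\<close> by a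
  scalar \<open>e\<^sub>b\<close> (and other isotypic types to zero), so killing \<open>v\<close> means \<open>\<Sum>\<^sub>b e\<^sub>b v\<^sub>i\<^sub>b = 0\<close>:
  genericity rules this out, and a nontrivial relation \<open>\<Sum>\<^sub>j a\<^sub>j v\<^sub>i\<^sub>j = 0\<close> conversely gives an
  equivariant idempotent onto one copy that kills \<open>v\<close>.
\<close>

section \<open>Linear maps on subspaces\<close>

definition linear_on :: "(complex^'n) set \<Rightarrow> (complex^'n \<Rightarrow> complex^'m) \<Rightarrow> bool" where
  "linear_on S f \<longleftrightarrow>
     (\<forall>x\<in>S. \<forall>y\<in>S. f (x + y) = f x + f y) \<and> (\<forall>c. \<forall>x\<in>S. f (c *s x) = c *s f x)"

lemma linear_on_0: "linear_on S f \<Longrightarrow> vec.subspace S \<Longrightarrow> f 0 = 0"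
  unfolding linear_on_def by (metis vec.subspace_0 vector_smult_lzero)

lemma linear_on_diff:
  assumes f: "linear_on S f" and S: "vec.subspace S" and "x \<in> S" "y \<in> S"
  shows "f (x - y) = f x - f y"
proof -
  have "x - y = x + (-1) *s y" by (simp add: vec_eq_iff)
  moreover have "(-1) *s y \<in> S" using S \<open>y \<in> S\<close> by (rule vec.subspace_scale)
  ultimately have "f (x - y) = f x + (-1) *s f y"
    using f \<open>x \<in> S\<close> \<open>y \<in> S\<close> unfolding linear_on_def by metis
  then show ?thesis by (simp add: vec_eq_iff)
qed

lemma linear_on_sum:
  assumes f: "linear_on S f" and S: "vec.subspace S" and "finite A" "\<forall>i\<in>A. g i \<in> S"
  shows "f (\<Sum>i\<in>A. g i) = (\<Sum>i\<in>A. f (g i))"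
  using assms(3,4)
proof (induction A rule: finite_induct)
  case empty
  then show ?case using linear_on_0[OF f S] by simp
next
  case (insert a A)
  have "(\<Sum>i\<in>A. g i) \<in> S" using insert S by (auto intro: vec.subspace_sum)
  then show ?case using insert f unfolding linear_on_def by simp
qed

lemma linear_on_comp:
  "linear_on X f \<Longrightarrow> f ` X \<subseteq> Y \<Longrightarrow> linear_on Y g \<Longrightarrow> linear_on X (g \<circ> f)"
  unfolding linear_on_def by (auto simp: image_subset_iff)

lemma linear_on_inv_into:
  assumes f: "linear_on X f" and bij: "bij_betw f X Y" and X: "vec.subspace X"
  shows "linear_on Y (inv_into X f)"
proof -
  have inv_in: "inv_into X f y \<in> X" and f_inv: "f (inv_into X f y) = y" if "y \<in> Y" for y
    using bij that by (auto simp: bij_betw_def inv_into_into f_inv_into_f)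
  have inv_f: "inv_into X f (f x) = x" if "x \<in> X" for x
    using bij that by (simp add: bij_betw_def)
  show ?thesis
    unfolding linear_on_def
  proof (intro conjI ballI allI)
    fix x y assume "x \<in> Y" "y \<in> Y"
    then have "x + y = f (inv_into X f x + inv_into X f y)"
      using f inv_in f_inv unfolding linear_on_def by simp
    then show "inv_into X f (x + y) = inv_into X f x + inv_into X f y"
      using inv_f inv_in \<open>x \<in> Y\<close> \<open>y \<in> Y\<close> X vec.subspace_add by metis
  next
    fix c x assume "x \<in> Y"
    then have "c *s x = f (c *s inv_into X f x)"
      using f inv_in f_inv unfolding linear_on_def by simp
    then show "inv_into X f (c *s x) = c *s inv_into X f x"
      using inv_f inv_in \<open>x \<in> Y\<close> X vec.subspace_scale by metis
  qed
qed

lemma matrix_of_linear_on_UNIV: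
  fixes f :: "complex^'n \<Rightarrow> complex^'m"
  assumes "linear_on UNIV f"
  shows "\<exists>M. \<forall>x. M *v x = f x"
proof -
  have "Vector_Spaces.linear (*s) (*s) f"
    using assms unfolding linear_on_def Vector_Spaces.linear_iff by (simp add: vec.vector_space_axioms)
  then show ?thesis using matrix_works by blast
qed

definition family_independent :: "(nat \<Rightarrow> complex^'n) \<Rightarrow> nat \<Rightarrow> bool" where
  "family_independent f m \<longleftrightarrow> (\<forall>a. (\<Sum>j<m. a j *s f j) = 0 \<longrightarrow> (\<forall>j<m. a j = 0))"

lemma inj_on_if_family_independent:
  assumes ind: "family_independent f m"
  shows "inj_on f {..<m}"
proof (rule inj_onI)
  fix p q assume pq: "p \<in> {..<m}" "q \<in> {..<m}" "f p = f q"
  define a where "a j = (if j = p then 1 else if j = q then -1 else (0::complex))" for j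
  show "p = q"
  proof (rule ccontr)
    assume "p \<noteq> q"
    then have "(\<Sum>j<m. a j *s f j) = (\<Sum>j<m. (if j = p then f p else 0) + (if j = q then - f q else 0))"
      by (intro sum.cong) (auto simp: a_def)
    also have "\<dots> = 0" using pq by (simp add: sum.distrib)
    finally have "a p = 0" using ind pq(1) unfolding family_independent_def by blast
    then show False by (simp add: a_def)
  qed
qed

lemma dim_span_family_eq_iff_independent:
  "vec.dim (vec.span (f ` {..<m})) = m \<longleftrightarrow> family_independent f m"
proof
  let ?T = "f ` {..<m}"
  assume d: "vec.dim (vec.span ?T) = m"
  have "vec.dim (vec.span ?T) \<le> card ?T" by (rule vec.dim_le_card) (auto simp: vec.span_superset)
  moreover have "card ?T \<le> m" using card_image_le[of "{..<m}" f] by simp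
  ultimately have card: "card ?T = m" using d by simp
  then have inj: "inj_on f {..<m}" by (simp add: eq_card_imp_inj_on)
  have "vec.independent ?T"
    using vec.card_eq_dim[of ?T "vec.span ?T"] card d vec.span_superset[of ?T] by simp
  then have ind: "\<forall>c. (\<Sum>v\<in>?T. c v *s v) = 0 \<longrightarrow> (\<forall>v\<in>?T. c v = 0)"
    using vec.independent_explicit by blast
  show "family_independent f m"
    unfolding family_independent_def
  proof (intro allI impI)
    fix a j assume rel: "(\<Sum>j<m. a j *s f j) = 0" and "j < m"
    define c where "c v = a (inv_into {..<m} f v)" for v
    have "(\<Sum>v\<in>?T. c v *s v) = (\<Sum>j<m. a j *s f j)"
      by (simp add: sum.reindex[OF inj] c_def inv_into_f_f[OF inj])
    then show "a j = 0" using ind rel \<open>j < m\<close> by (auto simp: c_def inv_into_f_f[OF inj])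
  qed
next
  let ?T = "f ` {..<m}"
  assume ind: "family_independent f m"
  note inj = inj_on_if_family_independent[OF ind]
  have indep: "vec.independent ?T"
    unfolding vec.independent_explicit
  proof (intro conjI allI impI ballI)
    fix c v assume rel: "(\<Sum>v\<in>?T. c v *s v) = 0" and "v \<in> ?T"
    then obtain j where "j < m" "v = f j" by auto
    have "(\<Sum>j<m. c (f j) *s f j) = 0" using rel by (simp add: sum.reindex[OF inj])
    then show "c v = 0"
      using ind \<open>j < m\<close> \<open>v = f j\<close> unfolding family_independent_def by auto
  qed simp
  then show "vec.dim (vec.span ?T) = m"
    using vec.dim_span_eq_card_independent[OF indep] card_image[OF inj] by simp
qed

lemma family_dependent_if_too_long:
  fixes f :: "nat \<Rightarrow> complex^'n"
  shows "\<exists>a. (\<exists>j<Suc CARD('n). a j \<noteq> 0) \<and> (\<Sum>j<Suc CARD('n). a j *s f j) = 0"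
proof -
  have "vec.dim (vec.span (f ` {..<Suc CARD('n)})) \<le> CARD('n)"
    using vec.dim_subset_UNIV by (simp add: vec.dimension_def card_cart_basis)
  then show ?thesis
    using dim_span_family_eq_iff_independent[of f "Suc CARD('n)"] unfolding family_independent_def by auto
qed

section \<open>Eigenvectors\<close>

definition poly_apply :: "(complex^'n \<Rightarrow> complex^'n) \<Rightarrow> complex poly \<Rightarrow> complex^'n \<Rightarrow> complex^'n" where
  "poly_apply h p x = (\<Sum>k\<le>degree p. coeff p k *s (h ^^ k) x)"

lemma poly_apply_eq_sum: "degree p \<le> M \<Longrightarrow> poly_apply h p x = (\<Sum>k\<le>M. coeff p k *s (h ^^ k) x)"
  unfolding poly_apply_def by (rule sum.mono_neutral_left) (auto simp: coeff_eq_0)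

lemma poly_apply_const [simp]: "poly_apply h [:c:] x = c *s x"
  by (simp add: poly_apply_def)

lemma poly_apply_add: "poly_apply h (p + q) x = poly_apply h p x + poly_apply h q x"
proof -
  let ?M = "max (degree p) (degree q)"
  have "poly_apply h (p + q) x = (\<Sum>k\<le>?M. coeff (p + q) k *s (h ^^ k) x)"
    by (rule poly_apply_eq_sum) (simp add: degree_add_le)
  also have "\<dots> = (\<Sum>k\<le>?M. coeff p k *s (h ^^ k) x) + (\<Sum>k\<le>?M. coeff q k *s (h ^^ k) x)"
    by (simp add: sum.distrib vector_sadd_rdistrib)
  also have "\<dots> = poly_apply h p x + poly_apply h q x"
    using poly_apply_eq_sum[of p ?M h x] poly_apply_eq_sum[of q ?M h x] by simp
  finally show ?thesis .
qed

lemma poly_apply_smult: "poly_apply h (smult c p) x = c *s poly_apply h p x"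
proof -
  have "poly_apply h (smult c p) x = (\<Sum>k\<le>degree p. coeff (smult c p) k *s (h ^^ k) x)"
    by (rule poly_apply_eq_sum) simp
  then show ?thesis by (simp add: poly_apply_def vec.scale_sum_right vector_smult_assoc)
qed

context
  fixes S :: "(complex^'n) set" and h :: "complex^'n \<Rightarrow> complex^'n"
  assumes S: "vec.subspace S" and h_maps: "\<forall>x\<in>S. h x \<in> S" and h_lin: "linear_on S h"
begin

lemma funpow_in_subspace: "x \<in> S \<Longrightarrow> (h ^^ k) x \<in> S"
  by (induction k) (use h_maps in auto)

lemma poly_apply_in_subspace: "x \<in> S \<Longrightarrow> poly_apply h p x \<in> S"
  unfolding poly_apply_def using S funpow_in_subspace
  by (intro vec.subspace_sum) (auto intro: vec.subspace_scale)

lemma poly_apply_pCons_0: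
  assumes x: "x \<in> S"
  shows "poly_apply h (pCons 0 p) x = h (poly_apply h p x)"
proof -
  have "poly_apply h (pCons 0 p) x = (\<Sum>k\<le>Suc (degree p). coeff (pCons 0 p) k *s (h ^^ k) x)"
    by (rule poly_apply_eq_sum) (simp add: degree_pCons_le)
  also have "\<dots> = (\<Sum>k\<le>degree p. h (coeff p k *s (h ^^ k) x))"
    using h_lin funpow_in_subspace[OF x] unfolding linear_on_def
    by (subst sum.atMost_Suc_shift) simp
  also have "\<dots> = h (poly_apply h p x)"
    unfolding poly_apply_def using funpow_in_subspace[OF x]
    by (subst linear_on_sum[OF h_lin S]) (auto intro: vec.subspace_scale[OF S])
  finally show ?thesis .
qed

lemma poly_apply_linear_factor:
  assumes "x \<in> S"
  shows "poly_apply h ([:-r, 1:] * p) x = h (poly_apply h p x) - r *s poly_apply h p x"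
proof -
  have "[:-r, 1:] * p = smult (-r) p + pCons 0 p" by (simp add: mult_pCons_left)
  then have "poly_apply h ([:-r, 1:] * p) x = (-r) *s poly_apply h p x + h (poly_apply h p x)"
    by (simp only: poly_apply_add poly_apply_smult poly_apply_pCons_0[OF assms])
  then show ?thesis by (simp add: vec_eq_iff)
qed

text \<open>Peel off linear factors of an annihilating polynomial (which exist by the fundamental
  theorem of algebra) until the remaining factor no longer kills \<open>w\<close>.\<close>
lemma eigenvector_if_annihilating_poly:
  "p \<noteq> 0 \<Longrightarrow> w \<in> S \<Longrightarrow> w \<noteq> 0 \<Longrightarrow> poly_apply h p w = 0 \<Longrightarrow>
    \<exists>l u. u \<in> S \<and> u \<noteq> 0 \<and> h u = l *s u"
proof (induction "degree p" arbitrary: p rule: less_induct)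
  case less
  show ?case
  proof (cases "degree p = 0")
    case True
    then obtain c where "p = [:c:]" by (meson degree_eq_zeroE)
    then show ?thesis using less.prems by (auto simp: vector_mul_eq_0)
  next
    case False
    then obtain r where "poly p r = 0" using alg_closed_imp_poly_has_root by blast
    then obtain q where pq: "p = [:-r, 1:] * q" by (meson dvd_def poly_eq_0_iff_dvd)
    then have q0: "q \<noteq> 0" using less.prems by auto
    have "degree ([:-r, 1:] * q) = degree q + 1" by (subst degree_mult_eq) (use q0 in auto)
    then have dq: "degree q < degree p" using pq by simp
    let ?u = "poly_apply h q w"
    show ?thesis
    proof (cases "?u = 0")
      case True
      then show ?thesis using less.hyps[OF dq q0] less.prems by blast
    next
      case False
      have "h ?u - r *s ?u = 0" using poly_apply_linear_factor[of w r q] less.prems pq by simp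
      then show ?thesis
        using False poly_apply_in_subspace[OF \<open>w \<in> S\<close>] by (intro exI[of _ r] exI[of _ ?u]) auto
    qed
  qed
qed

lemma subspace_has_eigenvector:
  assumes "S \<noteq> {0}"
  shows "\<exists>l u. u \<in> S \<and> u \<noteq> 0 \<and> h u = l *s u"
proof -
  obtain w where w: "w \<in> S" "w \<noteq> 0" using assms vec.subspace_0[OF S] by blast
  obtain a where a: "\<exists>k<Suc CARD('n). a k \<noteq> 0" "(\<Sum>k<Suc CARD('n). a k *s (h ^^ k) w) = 0"
    using family_dependent_if_too_long[of "\<lambda>k. (h ^^ k) w"] by blast
  define p where "p = (\<Sum>k\<le>CARD('n). monom (a k) k)"
  have coeff_p: "coeff p k = (if k \<le> CARD('n) then a k else 0)" for k
    unfolding p_def by (simp add: coeff_sum coeff_monom)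
  have "degree p \<le> CARD('n)"
    unfolding p_def by (intro degree_sum_le) (auto intro: order.trans[OF degree_monom_le])
  then have "poly_apply h p w = 0"
    using a(2) by (simp add: poly_apply_eq_sum coeff_p lessThan_Suc_atMost)
  moreover have "p \<noteq> 0" using a(1) coeff_p by (metis coeff_0 less_Suc_eq_le)
  ultimately show ?thesis using eigenvector_if_annihilating_poly w by blast
qed

end

section \<open>Schur's lemma\<close>

definition equivariant_on ::
  "('g, 'b) monoid_scheme \<Rightarrow> ('g \<Rightarrow> complex^'n^'n) \<Rightarrow> (complex^'n) set \<Rightarrow> (complex^'n \<Rightarrow> complex^'n) \<Rightarrow> bool"
  where "equivariant_on G \<rho> X f \<longleftrightarrow> (\<forall>g\<in>carrier G. \<forall>x\<in>X. f (\<rho> g *v x) = \<rho> g *v f x)"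

lemma module_iso_imp_linear_on: "module_iso G \<rho> f X Y \<Longrightarrow> linear_on X f"
  unfolding module_iso_def linear_on_def by blast

lemma module_iso_imp_equivariant_on: "module_iso G \<rho> f X Y \<Longrightarrow> equivariant_on G \<rho> X f"
  unfolding module_iso_def equivariant_on_def by blast

lemma module_isoI:
  "bij_betw f X Y \<Longrightarrow> linear_on X f \<Longrightarrow> equivariant_on G \<rho> X f \<Longrightarrow> module_iso G \<rho> f X Y"
  unfolding module_iso_def linear_on_def equivariant_on_def by blast

lemma module_iso_inv_into:
  assumes iso: "module_iso G \<rho> f X Y" and X: "invariant_subspace G \<rho> X"
  shows "module_iso G \<rho> (inv_into X f) Y X"
proof (rule module_isoI)
  have bij: "bij_betw f X Y" using iso unfolding module_iso_def by blast
  then show "bij_betw (inv_into X f) Y X" by (rule bij_betw_inv_into)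
  show "linear_on Y (inv_into X f)"
    using linear_on_inv_into module_iso_imp_linear_on[OF iso] bij X
    unfolding invariant_subspace_def by blast
  show "equivariant_on G \<rho> Y (inv_into X f)"
    unfolding equivariant_on_def
  proof (intro ballI)
    fix g y assume g: "g \<in> carrier G" and y: "y \<in> Y"
    have x: "inv_into X f y \<in> X" using bij y by (metis bij_betw_imp_surj_on inv_into_into)
    then have "\<rho> g *v inv_into X f y \<in> X" using X g unfolding invariant_subspace_def by blast
    moreover have "\<rho> g *v y = f (\<rho> g *v inv_into X f y)"
      using module_iso_imp_equivariant_on[OF iso] x g bij_betw_inv_into_right[OF bij y]
      unfolding equivariant_on_def by metis
    ultimately show "inv_into X f (\<rho> g *v y) = \<rho> g *v inv_into X f y"
      using bij_betw_inv_into_left[OF bij] by metis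
  qed
qed

lemma invariant_subspace_kernel:
  assumes "invariant_subspace G \<rho> X" "linear_on X f" "equivariant_on G \<rho> X f"
  shows "invariant_subspace G \<rho> {x\<in>X. f x = 0}"
  using assms linear_on_0[OF assms(2)]
  unfolding invariant_subspace_def vec.subspace_def linear_on_def equivariant_on_def by auto

lemma invariant_subspace_image:
  assumes X: "invariant_subspace G \<rho> X" and f: "linear_on X f" "equivariant_on G \<rho> X f"
  shows "invariant_subspace G \<rho> (f ` X)"
  unfolding invariant_subspace_def vec.subspace_def
proof (intro conjI ballI allI)
  have Xs: "vec.subspace X" using X invariant_subspace_def by blast
  show "0 \<in> f ` X" using linear_on_0[OF f(1) Xs] vec.subspace_0[OF Xs] by force
  fix x y assume "x \<in> f ` X" "y \<in> f ` X"
  then obtain a b where "a \<in> X" "b \<in> X" "x = f a" "y = f b" by auto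
  then show "x + y \<in> f ` X" using f Xs unfolding linear_on_def by (metis image_eqI vec.subspace_add)
next
  have Xs: "vec.subspace X" using X invariant_subspace_def by blast
  fix c x assume "x \<in> f ` X"
  then obtain a where "a \<in> X" "x = f a" by auto
  then show "c *s x \<in> f ` X" using f Xs unfolding linear_on_def by (metis image_eqI vec.subspace_scale)
next
  fix g w assume "g \<in> carrier G" "w \<in> f ` X"
  then obtain a where "a \<in> X" "w = f a" by auto
  then show "\<rho> g *v w \<in> f ` X" using f X \<open>g \<in> carrier G\<close>
    unfolding equivariant_on_def invariant_subspace_def by (metis image_eqI)
qed

lemma schur_zero_or_bij:
  assumes X: "irreducible_submodule G \<rho> X" and Y: "irreducible_submodule G \<rho> Y"
    and f: "linear_on X f" "equivariant_on G \<rho> X f" "f ` X \<subseteq> Y"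
  shows "(\<forall>x\<in>X. f x = 0) \<or> bij_betw f X Y"
proof -
  have Xi: "invariant_subspace G \<rho> X" and Xs: "vec.subspace X"
    using X unfolding irreducible_submodule_def invariant_subspace_def by auto
  have "{x\<in>X. f x = 0} = {0} \<or> {x\<in>X. f x = 0} = X"
    using X invariant_subspace_kernel[OF Xi f(1,2)] unfolding irreducible_submodule_def by auto
  then show ?thesis
  proof
    assume K: "{x\<in>X. f x = 0} = {0}"
    have "inj_on f X"
    proof (rule inj_onI)
      fix x y assume "x \<in> X" "y \<in> X" "f x = f y"
      then have "x - y \<in> {x\<in>X. f x = 0}"
        using linear_on_diff[OF f(1) Xs] vec.subspace_diff[OF Xs] by auto
      then show "x = y" using K by auto
    qed
    moreover have "f ` X \<noteq> {0}" using K X unfolding irreducible_submodule_def by auto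
    then have "f ` X = Y"
      using Y f(3) invariant_subspace_image[OF Xi f(1,2)] unfolding irreducible_submodule_def by blast
    ultimately show ?thesis unfolding bij_betw_def by blast
  qed auto
qed

lemma schur_scalar:
  assumes X: "irreducible_submodule G \<rho> X"
    and f: "linear_on X f" "equivariant_on G \<rho> X f" "\<forall>x\<in>X. f x \<in> X"
  shows "\<exists>l. \<forall>x\<in>X. f x = l *s x"
proof -
  have Xi: "invariant_subspace G \<rho> X" and Xs: "vec.subspace X"
    using X unfolding irreducible_submodule_def invariant_subspace_def by auto
  obtain l u where u: "u \<in> X" "u \<noteq> 0" "f u = l *s u"
    using subspace_has_eigenvector[OF Xs f(3,1)] X unfolding irreducible_submodule_def by blast
  define h where "h x = f x - l *s x" for x
  have "linear_on X h" using f(1) unfolding linear_on_def h_def by (auto simp: vec_eq_iff algebra_simps)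
  moreover have "equivariant_on G \<rho> X h" using f(2) unfolding equivariant_on_def h_def
    by (auto simp: matrix_vector_mult_diff_distrib vec.scale)
  ultimately have K: "invariant_subspace G \<rho> {x\<in>X. h x = 0}" by (rule invariant_subspace_kernel[OF Xi])
  have "{x\<in>X. h x = 0} \<noteq> {0}" using u by (auto simp: h_def)
  then have "{x\<in>X. h x = 0} = X" using X K unfolding irreducible_submodule_def by blast
  then show ?thesis by (auto simp: h_def)
qed

section \<open>Equivariant endomorphisms and isotypic components\<close>

definition equivariant_matrix :: "('g, 'b) monoid_scheme \<Rightarrow> ('g \<Rightarrow> complex^'n^'n) \<Rightarrow> complex^'n^'n \<Rightarrow> bool"
  where "equivariant_matrix G \<rho> E \<longleftrightarrow> (\<forall>g\<in>carrier G. E ** \<rho> g = \<rho> g ** E)"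

lemma equivariant_matrix_apply:
  "equivariant_matrix G \<rho> E \<Longrightarrow> g \<in> carrier G \<Longrightarrow> E *v (\<rho> g *v x) = \<rho> g *v (E *v x)"
  unfolding equivariant_matrix_def by (simp add: matrix_vector_mul_assoc)

lemma equivariant_matrixI:
  "(\<And>g x. g \<in> carrier G \<Longrightarrow> E *v (\<rho> g *v x) = \<rho> g *v (E *v x)) \<Longrightarrow> equivariant_matrix G \<rho> E"
  unfolding equivariant_matrix_def by (simp add: matrix_eq matrix_vector_mul_assoc[symmetric])

lemma matrix_vector_sum: "A *v (\<Sum>a\<in>S. f a) = (\<Sum>a\<in>S. A *v f a)"
  by (induction S rule: infinite_finite_induct) (auto simp: matrix_vector_right_distrib)

locale isotypic_decomp =
  fixes G :: "('g, 'b) monoid_scheme" and \<rho> :: "'g \<Rightarrow> complex^'n^'n"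
    and k :: nat and n :: "nat \<Rightarrow> nat"
    and W :: "nat \<Rightarrow> nat \<Rightarrow> (complex^'n) set"
    and \<phi> :: "nat \<Rightarrow> nat \<Rightarrow> complex^'n \<Rightarrow> complex^'n"
  assumes decomp: "isotypic_decomposition G \<rho> k n W \<phi>"
begin

definition "I = Sigma {..<k} (\<lambda>i. {..<n i})"

definition is_decomp :: "complex^'n \<Rightarrow> (nat \<Rightarrow> nat \<Rightarrow> complex^'n) \<Rightarrow> bool" where
  "is_decomp x c \<longleftrightarrow>
     (\<forall>i j. (i < k \<and> j < n i \<longrightarrow> c i j \<in> W i j) \<and> (\<not> (i < k \<and> j < n i) \<longrightarrow> c i j = 0)) \<and>
     x = (\<Sum>(i,j)\<in>I. c i j)"

definition component :: "complex^'n \<Rightarrow> nat \<Rightarrow> nat \<Rightarrow> complex^'n" where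
  "component x = (THE c. is_decomp x c)"

definition \<psi> :: "nat \<Rightarrow> nat \<Rightarrow> complex^'n \<Rightarrow> complex^'n" where
  "\<psi> i j = inv_into (W i 0) (\<phi> i j)"

lemma finite_I [simp]: "finite I"
  unfolding I_def by auto

lemma decomp_conds:
  "\<forall>i<k. 0 < n i"
  "\<forall>i<k. \<forall>j<n i. irreducible_submodule G \<rho> (W i j)"
  "\<forall>i<k. \<forall>j<n i. module_iso G \<rho> (\<phi> i j) (W i 0) (W i j)"
  "\<forall>i<k. \<forall>i'<k. i \<noteq> i' \<longrightarrow> \<not> (\<exists>f. module_iso G \<rho> f (W i 0) (W i' 0))"
  "\<forall>x. \<exists>!c. is_decomp x c"
  using decomp unfolding isotypic_decomposition_def is_decomp_def I_def by simp_all

lemma n_pos: "i < k \<Longrightarrow> 0 < n i"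
  using decomp_conds(1) by blast

lemma irreducible_W: "i < k \<Longrightarrow> j < n i \<Longrightarrow> irreducible_submodule G \<rho> (W i j)"
  using decomp_conds(2) by blast

lemma invariant_W: "i < k \<Longrightarrow> j < n i \<Longrightarrow> invariant_subspace G \<rho> (W i j)"
  using irreducible_W unfolding irreducible_submodule_def by blast

lemma subspace_W: "i < k \<Longrightarrow> j < n i \<Longrightarrow> vec.subspace (W i j)"
  using invariant_W unfolding invariant_subspace_def by blast

lemma subspace_W0: "i < k \<Longrightarrow> vec.subspace (W i 0)"
  using subspace_W n_pos by blast

lemma module_iso_\<phi>: "i < k \<Longrightarrow> j < n i \<Longrightarrow> module_iso G \<rho> (\<phi> i j) (W i 0) (W i j)"
  using decomp_conds(3) by blast

lemma not_module_iso: "i < k \<Longrightarrow> i' < k \<Longrightarrow> i \<noteq> i' \<Longrightarrow> \<not> module_iso G \<rho> f (W i 0) (W i' 0)"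
  using decomp_conds(4) by blast

lemma ex1_decomp: "\<exists>!c. is_decomp x c"
  using decomp_conds(5) by blast

lemma is_decomp_component: "is_decomp x (component x)"
  unfolding component_def using ex1_decomp by (rule theI')

lemma component_in: "i < k \<Longrightarrow> j < n i \<Longrightarrow> component x i j \<in> W i j"
  using is_decomp_component unfolding is_decomp_def by blast

lemma component_out: "\<not> (i < k \<and> j < n i) \<Longrightarrow> component x i j = 0"
  using is_decomp_component unfolding is_decomp_def by blast

lemma sum_components: "x = (\<Sum>(i,j)\<in>I. component x i j)"
  using is_decomp_component unfolding is_decomp_def by blast

lemma matrix_vector_sum_components: "A *v x = (\<Sum>(i,j)\<in>I. A *v component x i j)"
proof -
  have "A *v x = A *v (\<Sum>(i,j)\<in>I. component x i j)"
    by (simp only: sum_components[of x, symmetric])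
  then show ?thesis by (simp add: matrix_vector_sum split_def)
qed

lemma component_eqI:
  assumes "\<forall>i<k. \<forall>j<n i. c i j \<in> W i j" "x = (\<Sum>(i,j)\<in>I. c i j)" "i < k" "j < n i"
  shows "component x i j = c i j"
proof -
  let ?c = "\<lambda>i j. if i < k \<and> j < n i then c i j else 0"
  have "is_decomp x ?c"
    using assms(1,2) unfolding is_decomp_def by (auto intro!: sum.cong simp: I_def)
  then have "component x = ?c"
    unfolding component_def by (rule the1_equality[OF ex1_decomp])
  then show ?thesis using assms(3,4) by simp
qed

lemma component_add: "component (x + y) i j = component x i j + component y i j"
proof (cases "i < k \<and> j < n i")
  case True
  show ?thesis
  proof (rule component_eqI)
    show "\<forall>i<k. \<forall>j<n i. component x i j + component y i j \<in> W i j"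
      using component_in subspace_W vec.subspace_add by blast
    show "x + y = (\<Sum>(i,j)\<in>I. component x i j + component y i j)"
      using sum_components[of x] sum_components[of y] by (simp add: sum.distrib split_def)
  qed (use True in auto)
qed (simp add: component_out)

lemma component_scale: "component (a *s x) i j = a *s component x i j"
proof (cases "i < k \<and> j < n i")
  case True
  show ?thesis
  proof (rule component_eqI)
    show "\<forall>i<k. \<forall>j<n i. a *s component x i j \<in> W i j"
      using component_in subspace_W vec.subspace_scale by blast
    show "a *s x = (\<Sum>(i,j)\<in>I. a *s component x i j)"
      using sum_components[of x] by (metis (no_types, lifting) case_prod_unfold sum.cong vec.scale_sum_right)
  qed (use True in auto)
qed (simp add: component_out)

lemma component_0 [simp]: "component 0 i j = 0"
  using component_scale[of 0 0] by simp

lemma component_sum: "finite A \<Longrightarrow> component (\<Sum>a\<in>A. f a) i j = (\<Sum>a\<in>A. component (f a) i j)"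
  by (induction A rule: finite_induct) (auto simp: component_add)

lemma component_of_mem:
  assumes "i0 < k" "j0 < n i0" "w \<in> W i0 j0" "i < k" "j < n i"
  shows "component w i j = (if i = i0 \<and> j = j0 then w else 0)"
proof (rule component_eqI)
  show "\<forall>i<k. \<forall>j<n i. (if i = i0 \<and> j = j0 then w else 0) \<in> W i j"
    using assms(3) subspace_W vec.subspace_0 by auto
  have "(\<Sum>(i,j)\<in>I. (if i = i0 \<and> j = j0 then w else 0)) = (\<Sum>p\<in>I. (if (i0,j0) = p then w else 0))"
    by (rule sum.cong) (auto split: if_splits)
  also have "\<dots> = w" using assms(1,2) by (simp add: I_def)
  finally show "w = (\<Sum>(i,j)\<in>I. (if i = i0 \<and> j = j0 then w else 0))" by simp
qed (use assms in auto)

lemma component_\<rho>: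
  assumes "g \<in> carrier G"
  shows "component (\<rho> g *v x) i j = \<rho> g *v component x i j"
proof (cases "i < k \<and> j < n i")
  case True
  show ?thesis
  proof (rule component_eqI)
    show "\<forall>i<k. \<forall>j<n i. \<rho> g *v component x i j \<in> W i j"
      using component_in invariant_W assms unfolding invariant_subspace_def by blast
    show "\<rho> g *v x = (\<Sum>(i,j)\<in>I. \<rho> g *v component x i j)"
      by (rule matrix_vector_sum_components)
  qed (use True in auto)
qed (simp add: component_out)

lemma linear_on_\<phi>: "i < k \<Longrightarrow> j < n i \<Longrightarrow> linear_on (W i 0) (\<phi> i j)"
  using module_iso_\<phi> module_iso_imp_linear_on by blast

lemma equivariant_on_\<phi>: "i < k \<Longrightarrow> j < n i \<Longrightarrow> equivariant_on G \<rho> (W i 0) (\<phi> i j)"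
  using module_iso_\<phi> module_iso_imp_equivariant_on by blast

lemma bij_betw_\<phi>: "i < k \<Longrightarrow> j < n i \<Longrightarrow> bij_betw (\<phi> i j) (W i 0) (W i j)"
  using module_iso_\<phi> unfolding module_iso_def by blast

lemma module_iso_\<psi>: "i < k \<Longrightarrow> j < n i \<Longrightarrow> module_iso G \<rho> (\<psi> i j) (W i j) (W i 0)"
  unfolding \<psi>_def using module_iso_inv_into module_iso_\<phi> invariant_W n_pos by blast

lemma linear_on_\<psi>: "i < k \<Longrightarrow> j < n i \<Longrightarrow> linear_on (W i j) (\<psi> i j)"
  using module_iso_\<psi> module_iso_imp_linear_on by blast

lemma equivariant_on_\<psi>: "i < k \<Longrightarrow> j < n i \<Longrightarrow> equivariant_on G \<rho> (W i j) (\<psi> i j)"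
  using module_iso_\<psi> module_iso_imp_equivariant_on by blast

lemma \<psi>_\<phi>: "i < k \<Longrightarrow> j < n i \<Longrightarrow> x \<in> W i 0 \<Longrightarrow> \<psi> i j (\<phi> i j x) = x"
  unfolding \<psi>_def using bij_betw_\<phi> bij_betw_inv_into_left by metis

lemma \<phi>_\<psi>: "i < k \<Longrightarrow> j < n i \<Longrightarrow> y \<in> W i j \<Longrightarrow> \<phi> i j (\<psi> i j y) = y"
  unfolding \<psi>_def using bij_betw_\<phi> bij_betw_inv_into_right by metis

lemma \<psi>_in: "i < k \<Longrightarrow> j < n i \<Longrightarrow> y \<in> W i j \<Longrightarrow> \<psi> i j y \<in> W i 0"
  unfolding \<psi>_def using bij_betw_\<phi> by (metis bij_betw_def inv_into_into)

lemma \<phi>_in: "i < k \<Longrightarrow> j < n i \<Longrightarrow> x \<in> W i 0 \<Longrightarrow> \<phi> i j x \<in> W i j"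
  using bij_betw_\<phi> bij_betw_apply by metis

lemma \<phi>_eq_0_iff:
  assumes "i < k" "j < n i" "x \<in> W i 0"
  shows "\<phi> i j x = 0 \<longleftrightarrow> x = 0"
proof -
  have "\<phi> i j 0 = 0" using linear_on_0[OF linear_on_\<phi>[OF assms(1,2)] subspace_W0[OF assms(1)]] .
  moreover have "0 \<in> W i 0" using vec.subspace_0[OF subspace_W0[OF assms(1)]] .
  ultimately show ?thesis using \<psi>_\<phi>[OF assms(1,2)] assms(3) by metis
qed

definition block :: "complex^'n^'n \<Rightarrow> nat \<Rightarrow> nat \<Rightarrow> nat \<Rightarrow> nat \<Rightarrow> complex^'n \<Rightarrow> complex^'n" where
  \<comment> \<open>the \<open>(i0, j0) \<rightarrow> (i, j)\<close> block of \<open>E\<close>, transported to \<open>W i0 0 \<rightarrow> W i 0\<close> so that Schur applies\<close>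
  "block E i0 j0 i j x = \<psi> i j (component (E *v \<phi> i0 j0 x) i j)"

lemma block_maps:
  assumes "i0 < k" "j0 < n i0" "i < k" "j < n i"
  shows "block E i0 j0 i j ` W i0 0 \<subseteq> W i 0"
  unfolding block_def using assms \<psi>_in component_in by auto

lemma linear_on_block:
  assumes "i0 < k" "j0 < n i0" "i < k" "j < n i"
  shows "linear_on (W i0 0) (block E i0 j0 i j)"
  using linear_on_\<phi>[OF assms(1,2)] linear_on_\<psi>[OF assms(3,4)] component_in[OF assms(3,4)]
  unfolding linear_on_def block_def
  by (simp add: matrix_vector_right_distrib component_add component_scale vec.scale)

lemma equivariant_on_block:
  assumes E: "equivariant_matrix G \<rho> E" and "i0 < k" "j0 < n i0" "i < k" "j < n i"
  shows "equivariant_on G \<rho> (W i0 0) (block E i0 j0 i j)"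
  using equivariant_on_\<phi>[OF assms(2,3)] equivariant_on_\<psi>[OF assms(4,5)] component_in[OF assms(4,5)]
  unfolding equivariant_on_def block_def
  by (simp add: equivariant_matrix_apply[OF E] component_\<rho>)

lemma component_eq_block:
  assumes "i0 < k" "j0 < n i0" "i < k" "j < n i" "w \<in> W i0 j0"
  shows "component (E *v w) i j = \<phi> i j (block E i0 j0 i j (\<psi> i0 j0 w))"
  unfolding block_def using assms \<phi>_\<psi> component_in by simp

lemma component_equivariant_offdiag:
  assumes E: "equivariant_matrix G \<rho> E" and idx: "i0 < k" "j0 < n i0" "i < k" "j < n i"
    and "i \<noteq> i0" "w \<in> W i0 j0"
  shows "component (E *v w) i j = 0"
proof -
  let ?h = "block E i0 j0 i j"
  have "\<not> module_iso G \<rho> ?h (W i0 0) (W i 0)"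
    using not_module_iso[OF idx(1,3)] \<open>i \<noteq> i0\<close> by auto
  then have "\<not> bij_betw ?h (W i0 0) (W i 0)"
    using module_isoI[OF _ linear_on_block[OF idx] equivariant_on_block[OF E idx]] by blast
  then have "\<forall>x\<in>W i0 0. ?h x = 0"
    using schur_zero_or_bij[OF irreducible_W[OF idx(1) n_pos[OF idx(1)]]
        irreducible_W[OF idx(3) n_pos[OF idx(3)]] linear_on_block[OF idx] equivariant_on_block[OF E idx]
        block_maps[OF idx]] by blast
  then show ?thesis
    using component_eq_block[OF idx \<open>w \<in> W i0 j0\<close>] \<psi>_in[OF idx(1,2) \<open>w \<in> W i0 j0\<close>]
      \<phi>_eq_0_iff[OF idx(3,4)] vec.subspace_0[OF subspace_W0[OF idx(3)]] by metis
qed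

lemma component_equivariant_diag:
  assumes E: "equivariant_matrix G \<rho> E" and idx: "i < k" "j0 < n i" "j < n i"
  shows "\<exists>e. \<forall>w\<in>W i j0. component (E *v w) i j = e *s \<phi> i j (\<psi> i j0 w)"
proof -
  have idx': "i < k" "j0 < n i" "i < k" "j < n i" using idx by auto
  obtain e where e: "\<forall>x\<in>W i 0. block E i j0 i j x = e *s x"
    using schur_scalar[OF irreducible_W[OF idx(1) n_pos[OF idx(1)]] linear_on_block[OF idx']
        equivariant_on_block[OF E idx']] block_maps[OF idx'] by blast
  have "component (E *v w) i j = e *s \<phi> i j (\<psi> i j0 w)" if w: "w \<in> W i j0" for w
    using component_eq_block[OF idx' w] e \<psi>_in[OF idx(1,2) w] linear_on_\<phi>[OF idx(1,3)]
    unfolding linear_on_def by simp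
  then show ?thesis by blast
qed

lemma component_equivariant_apply:
  assumes E: "equivariant_matrix G \<rho> E" and idx: "i < k" "j < n i"
  shows "component (E *v x) i j = (\<Sum>b<n i. component (E *v component x i b) i j)"
proof -
  have "component (E *v x) i j = (\<Sum>(a,b)\<in>I. component (E *v component x a b) i j)"
    by (subst matrix_vector_sum_components) (simp add: component_sum split_def)
  also have "\<dots> = (\<Sum>(a,b)\<in>I. if a = i then component (E *v component x i b) i j else 0)"
    using component_equivariant_offdiag[OF E _ _ idx] component_in by (intro sum.cong) (auto simp: I_def)
  also have "\<dots> = (\<Sum>a<k. \<Sum>b<n a. if a = i then component (E *v component x i b) i j else 0)"
    unfolding I_def by (rule sum.Sigma[symmetric]) auto
  also have "\<dots> = (\<Sum>a<k. if a = i then \<Sum>b<n i. component (E *v component x i b) i j else 0)"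
    by (rule sum.cong) auto
  also have "\<dots> = (\<Sum>b<n i. component (E *v component x i b) i j)"
    using idx(1) by simp
  finally show ?thesis .
qed

lemma matrix_eq_0_if_components_vanish:
  assumes "\<And>i0 j0 w i j. i0 < k \<Longrightarrow> j0 < n i0 \<Longrightarrow> w \<in> W i0 j0 \<Longrightarrow> i < k \<Longrightarrow> j < n i \<Longrightarrow>
             component (E *v w) i j = 0"
  shows "E = 0"
proof -
  have "E *v w = 0" if "i0 < k" "j0 < n i0" "w \<in> W i0 j0" for i0 j0 w
  proof -
    have "E *v w = (\<Sum>(i,j)\<in>I. component (E *v w) i j)" by (rule sum_components)
    also have "\<dots> = 0" using assms[OF that] by (intro sum.neutral) (auto simp: I_def)
    finally show ?thesis .
  qed
  then have "E *v x = 0" for x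
    using component_in by (subst matrix_vector_sum_components) (auto simp: I_def intro!: sum.neutral)
  then show ?thesis by (simp add: matrix_eq)
qed

lemma generic_iff_independent_components:
  "generic k n W \<phi> v \<longleftrightarrow> (\<forall>i<k. family_independent (\<lambda>j. \<psi> i j (component v i j)) (n i))"
  unfolding dim_span_family_eq_iff_independent[symmetric]
proof
  assume "generic k n W \<phi> v"
  then obtain c where c: "\<forall>i<k. \<forall>j<n i. c i j \<in> W i j" "v = (\<Sum>(i,j)\<in>I. c i j)"
    "\<forall>i<k. vec.dim (vec.span ((\<lambda>j. \<psi> i j (c i j)) ` {..<n i})) = n i"
    unfolding generic_def I_def \<psi>_def by blast
  have "(\<lambda>j. \<psi> i j (component v i j)) ` {..<n i} = (\<lambda>j. \<psi> i j (c i j)) ` {..<n i}" if "i < k" for i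
    using component_eqI[OF c(1,2) that] by simp
  then show "\<forall>i<k. vec.dim (vec.span ((\<lambda>j. \<psi> i j (component v i j)) ` {..<n i})) = n i"
    using c(3) by simp
next
  assume "\<forall>i<k. vec.dim (vec.span ((\<lambda>j. \<psi> i j (component v i j)) ` {..<n i})) = n i"
  then show "generic k n W \<phi> v"
    unfolding generic_def \<psi>_def using component_in sum_components[of v]
    by (intro exI[of _ "component v"]) (auto simp: I_def)
qed

text \<open>On the copy \<open>W i b\<close> the \<open>(i, j)\<close>-component of \<open>E\<close> is \<open>e\<^sub>b \<phi>\<^sub>i\<^sub>j \<psi>\<^sub>i\<^sub>b\<close>, so \<open>E v = 0\<close> gives
  \<open>\<phi>\<^sub>i\<^sub>j (\<Sum>\<^sub>b e\<^sub>b v\<^sub>i\<^sub>b) = 0\<close>, a relation that genericity forces to be trivial.\<close>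
lemma equivariant_annihilator_component_0:
  assumes E: "equivariant_matrix G \<rho> E" and Ev: "E *v v = 0" and gen: "generic k n W \<phi> v"
    and idx: "i < k" "j0 < n i" "j < n i" and w: "w \<in> W i j0"
  shows "component (E *v w) i j = 0"
proof -
  have "\<forall>b\<in>{..<n i}. \<exists>e. \<forall>w\<in>W i b. component (E *v w) i j = e *s \<phi> i j (\<psi> i b w)"
    using component_equivariant_diag[OF E idx(1) _ idx(3)] by blast
  then obtain e where e: "\<forall>b\<in>{..<n i}. \<forall>w\<in>W i b. component (E *v w) i j = e b *s \<phi> i j (\<psi> i b w)"
    by (metis bchoice)
  define u where "u b = \<psi> i b (component v i b)" for b
  have u_in: "u b \<in> W i 0" if "b < n i" for b
    unfolding u_def using \<psi>_in[OF idx(1) that] component_in[OF idx(1) that] by blast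
  have "\<phi> i j (\<Sum>b<n i. e b *s u b) = (\<Sum>b<n i. e b *s \<phi> i j (u b))"
    using linear_on_\<phi>[OF idx(1,3)] u_in subspace_W0[OF idx(1)]
    by (subst linear_on_sum[of "W i 0"]) (auto intro: vec.subspace_scale simp: linear_on_def)
  also have "\<dots> = (\<Sum>b<n i. component (E *v component v i b) i j)"
    using e component_in[OF idx(1)] by (simp add: u_def)
  also have "\<dots> = 0"
    using component_equivariant_apply[OF E idx(1,3), of v] Ev by simp
  finally have "(\<Sum>b<n i. e b *s u b) = 0"
    using \<phi>_eq_0_iff[OF idx(1,3)] u_in subspace_W0[OF idx(1)]
    by (metis (no_types, lifting) lessThan_iff vec.subspace_scale vec.subspace_sum)
  then have "\<forall>b<n i. e b = 0"
    using gen idx(1) unfolding generic_iff_independent_components family_independent_def u_def by blast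
  then show ?thesis using e idx w by simp
qed

lemma equivariant_annihilator_eq_0_if_generic:
  assumes "equivariant_matrix G \<rho> E" "E *v v = 0" "generic k n W \<phi> v"
  shows "E = 0"
proof (rule matrix_eq_0_if_components_vanish)
  fix i0 j0 w i j assume "i0 < k" "j0 < n i0" "w \<in> W i0 j0" "i < k" "j < n i"
  then show "component (E *v w) i j = 0"
    using component_equivariant_offdiag[OF assms(1)] equivariant_annihilator_component_0[OF assms]
    by (cases "i = i0") auto
qed

definition weighted_sum :: "nat \<Rightarrow> (nat \<Rightarrow> complex) \<Rightarrow> complex^'n \<Rightarrow> complex^'n" where
  "weighted_sum i a x = (\<Sum>j<n i. a j *s \<psi> i j (component x i j))"

context
  fixes i :: nat and a :: "nat \<Rightarrow> complex"
  assumes i: "i < k"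
begin

lemma \<psi>_component_in: "j < n i \<Longrightarrow> \<psi> i j (component x i j) \<in> W i 0"
  using \<psi>_in[OF i] component_in[OF i] by blast

lemma weighted_sum_in: "weighted_sum i a x \<in> W i 0"
  unfolding weighted_sum_def using \<psi>_component_in subspace_W0[OF i]
  by (intro vec.subspace_sum) (auto intro: vec.subspace_scale)

lemma linear_on_weighted_sum: "linear_on UNIV (weighted_sum i a)"
proof -
  have "\<psi> i j (component (x + y) i j) = \<psi> i j (component x i j) + \<psi> i j (component y i j)"
    "\<psi> i j (component (c *s x) i j) = c *s \<psi> i j (component x i j)" if "j < n i" for j x y c
    using linear_on_\<psi>[OF i that] component_in[OF i that]
    unfolding linear_on_def by (simp_all add: component_add component_scale)
  then show ?thesis unfolding linear_on_def weighted_sum_def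
    by (simp add: sum.distrib vector_add_ldistrib vec.scale_sum_right vector_smult_assoc mult.commute)
qed

lemma weighted_sum_\<rho>:
  assumes g: "g \<in> carrier G"
  shows "weighted_sum i a (\<rho> g *v x) = \<rho> g *v weighted_sum i a x"
proof -
  have "weighted_sum i a (\<rho> g *v x) = (\<Sum>j<n i. a j *s (\<rho> g *v \<psi> i j (component x i j)))"
    unfolding weighted_sum_def using equivariant_on_\<psi>[OF i] component_in[OF i] g
    by (intro sum.cong) (auto simp: component_\<rho> equivariant_on_def)
  also have "\<dots> = \<rho> g *v weighted_sum i a x"
    unfolding weighted_sum_def by (simp add: matrix_vector_sum vec.scale)
  finally show ?thesis .
qed

lemma weighted_sum_of_mem:
  assumes js: "js < n i" and y: "y \<in> W i js"
  shows "weighted_sum i a y = a js *s \<psi> i js y"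
proof -
  have "weighted_sum i a y = (\<Sum>j<n i. if j = js then a js *s \<psi> i js y else 0)"
    unfolding weighted_sum_def using component_of_mem[OF i js y i]
      linear_on_0[OF linear_on_\<psi>[OF i] subspace_W[OF i]]
    by (intro sum.cong) auto
  then show ?thesis using js by simp
qed

end

text \<open>If \<open>\<Sum>\<^sub>j a\<^sub>j v\<^sub>i\<^sub>j = 0\<close> with \<open>a\<^sub>j\<^sub>s \<noteq> 0\<close>, then \<open>x \<mapsto> a\<^sub>j\<^sub>s\<inverse> \<phi>\<^sub>i\<^sub>j\<^sub>s (\<Sum>\<^sub>j a\<^sub>j x\<^sub>i\<^sub>j)\<close> is an
  equivariant projection onto the copy \<open>W i js\<close> that kills \<open>v\<close>.\<close>
lemma idempotent_annihilator_if_not_generic: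
  assumes "\<not> generic k n W \<phi> v"
  shows "\<exists>D. D ** D = D \<and> equivariant_matrix G \<rho> D \<and> D *v v = 0 \<and> D \<noteq> 0"
proof -
  obtain i where i: "i < k" and "\<not> family_independent (\<lambda>j. \<psi> i j (component v i j)) (n i)"
    using assms unfolding generic_iff_independent_components by blast
  then obtain a js where rel: "weighted_sum i a v = 0" and js: "js < n i" "a js \<noteq> 0"
    unfolding weighted_sum_def family_independent_def by blast
  define P where "P x = (1 / a js) *s \<phi> i js (weighted_sum i a x)" for x
  have \<phi>_scale: "\<phi> i js (c *s x) = c *s \<phi> i js x" if "x \<in> W i 0" for c x
    using linear_on_\<phi>[OF i js(1)] that unfolding linear_on_def by blast
  have "linear_on UNIV (\<phi> i js \<circ> weighted_sum i a)"
    using weighted_sum_in[OF i]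
    by (intro linear_on_comp[OF linear_on_weighted_sum[OF i] _ linear_on_\<phi>[OF i js(1)]]) auto
  then have "linear_on UNIV P"
    unfolding P_def linear_on_def by (simp add: vector_add_ldistrib vector_smult_assoc mult.commute)
  then obtain M where M: "\<And>x. M *v x = P x" using matrix_of_linear_on_UNIV by blast
  have P_in: "P x \<in> W i js" for x
    unfolding P_def using \<phi>_in[OF i js(1) weighted_sum_in[OF i]] subspace_W[OF i js(1)] vec.subspace_scale by blast
  have P_id: "P y = y" if "y \<in> W i js" for y
    unfolding P_def using weighted_sum_of_mem[OF i js(1) that] \<phi>_scale \<psi>_in[OF i js(1) that]
      \<phi>_\<psi>[OF i js(1) that] js(2) by (simp add: vector_smult_assoc)
  obtain w where w: "w \<in> W i js" "w \<noteq> 0"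
    using irreducible_W[OF i js(1)] subspace_W[OF i js(1)] vec.subspace_0
    unfolding irreducible_submodule_def by blast
  show ?thesis
  proof (intro exI[of _ M] conjI)
    show "M ** M = M" by (simp add: matrix_eq matrix_vector_mul_assoc[symmetric] M P_id P_in)
    show "equivariant_matrix G \<rho> M"
      using equivariant_on_\<phi>[OF i js(1)] weighted_sum_in[OF i] weighted_sum_\<rho>[OF i]
      by (intro equivariant_matrixI) (simp add: M P_def equivariant_on_def vec.scale)
    show "M *v v = 0" using rel linear_on_0[OF linear_on_\<phi>[OF i js(1)] subspace_W0[OF i]]
      by (simp add: M P_def)
    show "M \<noteq> 0" using M P_id w by (metis matrix_vector_mult_0)
  qed
qed

end

section \<open>Annihilators of \<open>v\<close> and one-parameter subgroups\<close>

lemma orbit_span_invariant: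
  assumes rep: "representation G \<rho>"
  shows "invariant_subspace G \<rho> (vec.span ((\<lambda>h. \<rho> h *v v) ` carrier G))"
  unfolding invariant_subspace_def
proof (intro conjI ballI vec.subspace_span)
  let ?U = "vec.span ((\<lambda>h. \<rho> h *v v) ` carrier G)"
  fix g x assume g: "g \<in> carrier G" and x: "x \<in> ?U"
  have "(\<lambda>h. \<rho> h *v v) ` carrier G \<subseteq> {y. \<rho> g *v y \<in> ?U}"
  proof
    fix y assume "y \<in> (\<lambda>h. \<rho> h *v v) ` carrier G"
    then obtain h where h: "h \<in> carrier G" "y = \<rho> h *v v" by blast
    have "\<rho> g *v y = \<rho> (g \<otimes>\<^bsub>G\<^esub> h) *v v"
      using rep g h unfolding representation_def by (simp add: matrix_vector_mul_assoc)
    moreover have "g \<otimes>\<^bsub>G\<^esub> h \<in> carrier G"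
      using rep g h unfolding representation_def by (simp add: group.is_monoid monoid.m_closed)
    ultimately show "y \<in> {y. \<rho> g *v y \<in> ?U}" by (auto intro: vec.span_base)
  qed
  moreover have "vec.subspace {y. \<rho> g *v y \<in> ?U}"
    unfolding vec.subspace_def
    by (simp add: matrix_vector_right_distrib vec.scale vec.span_add vec.span_scale vec.span_zero)
  ultimately have "?U \<subseteq> {y. \<rho> g *v y \<in> ?U}" by (rule vec.span_minimal)
  then show "\<rho> g *v x \<in> ?U" using x by blast
qed

lemma equivariant_annihilator_eq_0_if_orbit_spans:
  assumes sp: "vec.span ((\<lambda>g. \<rho> g *v v) ` carrier G) = UNIV"
    and E: "equivariant_matrix G \<rho> E" and Ev: "E *v v = 0"
  shows "E = 0"
proof -
  have "(\<lambda>g. \<rho> g *v v) ` carrier G \<subseteq> {x. E *v x = 0}"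
    using equivariant_matrix_apply[OF E] Ev by auto
  moreover have "vec.subspace {x. E *v x = 0}"
    unfolding vec.subspace_def by (simp add: matrix_vector_right_distrib vec.scale)
  ultimately have "vec.span ((\<lambda>g. \<rho> g *v v) ` carrier G) \<subseteq> {x. E *v x = 0}"
    by (rule vec.span_minimal)
  then show ?thesis unfolding sp by (simp add: matrix_eq subset_iff)
qed

lemma complement_decomposition_unique:
  assumes "vec.subspace U" "vec.subspace V" "U \<inter> V = {0}"
    and "w1 \<in> V" "x - w1 \<in> U" "w2 \<in> V" "x - w2 \<in> U"
  shows "w1 = w2"
proof -
  have "w1 - w2 \<in> V" using assms(2,4,6) vec.subspace_diff by blast
  moreover have "(x - w2) - (x - w1) \<in> U" using assms(1,5,7) vec.subspace_diff by blast
  ultimately have "w1 - w2 \<in> U \<inter> V" by simp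
  then show ?thesis using assms(3) by simp
qed

lemma projection_along_complement:
  fixes U V :: "(complex^'n) set"
  assumes U: "vec.subspace U" and V: "vec.subspace V" and cap: "U \<inter> V = {0}"
    and sum: "{u + w | u w. u \<in> U \<and> w \<in> V} = UNIV"
  shows "\<exists>M. \<forall>x. M *v x \<in> V \<and> x - M *v x \<in> U"
proof -
  have ex: "\<exists>w. w \<in> V \<and> x - w \<in> U" for x
  proof -
    obtain u w where "x = u + w" "u \<in> U" "w \<in> V" using sum by blast
    then show ?thesis by (intro exI[of _ w]) simp
  qed
  define P where "P x = (THE w. w \<in> V \<and> x - w \<in> U)" for x
  have P: "P x \<in> V \<and> x - P x \<in> U" for x
  proof -
    have "\<exists>!w. w \<in> V \<and> x - w \<in> U" using ex[of x] complement_decomposition_unique[OF U V cap] by blast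
    then show ?thesis unfolding P_def by (rule theI')
  qed
  have P_eqI: "P x = w" if "w \<in> V" "x - w \<in> U" for x w
    using complement_decomposition_unique[OF U V cap] P that by blast
  have "P (x + y) = P x + P y" for x y
  proof (rule P_eqI)
    show "P x + P y \<in> V" using P V vec.subspace_add by blast
    have "(x - P x) + (y - P y) \<in> U" using P U vec.subspace_add by blast
    then show "x + y - (P x + P y) \<in> U" by (simp add: algebra_simps)
  qed
  moreover have "P (c *s x) = c *s P x" for c x
  proof (rule P_eqI)
    show "c *s P x \<in> V" using P V vec.subspace_scale by blast
    have "c *s (x - P x) \<in> U" using P U vec.subspace_scale by blast
    then show "c *s x - c *s P x \<in> U" by (simp add: vec.scale_right_diff_distrib)
  qed
  ultimately have "linear_on UNIV P" unfolding linear_on_def by simp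
  then show ?thesis using P matrix_of_linear_on_UNIV by metis
qed

lemma idempotent_annihilator_if_orbit_not_spans:
  assumes rep: "representation G \<rho>" and cr: "completely_reducible G \<rho>"
    and ne: "vec.span ((\<lambda>g. \<rho> g *v v) ` carrier G) \<noteq> UNIV"
  shows "\<exists>D. D ** D = D \<and> equivariant_matrix G \<rho> D \<and> D *v v = 0 \<and> D \<noteq> 0"
proof -
  define U where "U = vec.span ((\<lambda>g. \<rho> g *v v) ` carrier G)"
  have Ui: "invariant_subspace G \<rho> U" unfolding U_def by (rule orbit_span_invariant[OF rep])
  obtain V where V: "invariant_subspace G \<rho> V \<and> U \<inter> V = {0} \<and> {u + w | u w. u \<in> U \<and> w \<in> V} = UNIV"
    using cr[unfolded completely_reducible_def, rule_format, OF Ui] by (erule exE)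
  note Vi = V[THEN conjunct1] and cap = V[THEN conjunct2, THEN conjunct1]
    and sum = V[THEN conjunct2, THEN conjunct2]
  have Us: "vec.subspace U" and Vs: "vec.subspace V" using Ui Vi unfolding invariant_subspace_def by auto
  obtain M where M: "\<And>x. M *v x \<in> V \<and> x - M *v x \<in> U"
    using projection_along_complement[OF Us Vs cap sum] by blast
  note M_eqI = complement_decomposition_unique[OF Us Vs cap conjunct1[OF M] conjunct2[OF M]]
  have "\<one>\<^bsub>G\<^esub> \<in> carrier G" "\<rho> \<one>\<^bsub>G\<^esub> *v v = v"
    using rep unfolding representation_def by (auto intro: monoid.one_closed group.is_monoid)
  then have vU: "v \<in> U" unfolding U_def by (metis image_eqI vec.span_base)
  obtain x where x: "x \<notin> U" using ne U_def by blast
  show ?thesis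
  proof (intro exI[of _ M] conjI)
    show "M ** M = M"
      using M_eqI M vec.subspace_0[OF Us] by (simp add: matrix_eq matrix_vector_mul_assoc[symmetric])
    show "equivariant_matrix G \<rho> M"
    proof (rule equivariant_matrixI)
      fix g y assume g: "g \<in> carrier G"
      have "\<rho> g *v (M *v y) \<in> V" using Vi M g unfolding invariant_subspace_def by blast
      moreover have "\<rho> g *v (y - M *v y) \<in> U" using Ui M g unfolding invariant_subspace_def by blast
      then have "\<rho> g *v y - \<rho> g *v (M *v y) \<in> U" by (simp add: matrix_vector_mult_diff_distrib)
      ultimately show "M *v (\<rho> g *v y) = \<rho> g *v (M *v y)" by (rule M_eqI)
    qed
    show "M *v v = 0" using M_eqI[OF vec.subspace_0[OF Vs]] vU by simp
    show "M \<noteq> 0" using M[of x] x by auto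
  qed
qed

definition one_param_of_idempotent :: "complex^'n^'n \<Rightarrow> complex \<Rightarrow> complex^'n^'n" where
  \<comment> \<open>\<open>(1 - D) + t D\<close>, written entrywise\<close>
  "one_param_of_idempotent D t = (\<chi> a b. (if a = b then 1 else 0) + (t - 1) * D $ a $ b)"

lemma one_param_of_idempotent_apply: "one_param_of_idempotent D t *v x = x + (t - 1) *s (D *v x)"
proof -
  have "one_param_of_idempotent D t = mat 1 + (\<chi> a b. (t - 1) * D $ a $ b)"
    by (simp add: one_param_of_idempotent_def vec_eq_iff mat_def)
  moreover have "(\<chi> a b. (t - 1) * D $ a $ b) *v x = (t - 1) *s (D *v x)"
    by (simp add: vec_eq_iff matrix_vector_mult_def left_diff_distrib sum_subtractf sum_distrib_left mult.assoc)
  ultimately show ?thesis by (simp add: matrix_vector_mult_add_rdistrib)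
qed

lemma one_param_of_idempotent_mult:
  assumes "D ** D = D"
  shows "one_param_of_idempotent D s ** one_param_of_idempotent D t = one_param_of_idempotent D (s * t)"
proof -
  have "D *v (D *v x) = D *v x" for x using assms by (simp add: matrix_vector_mul_assoc)
  then show ?thesis
    by (simp add: matrix_eq matrix_vector_mul_assoc[symmetric] one_param_of_idempotent_apply
        matrix_vector_right_distrib vec.scale vec_eq_iff algebra_simps)
qed

lemma one_param_subgroup_of_idempotent:
  assumes "D ** D = D"
  shows "one_param_subgroup (one_param_of_idempotent D)"
  unfolding one_param_subgroup_def
proof (intro conjI allI impI)
  have one: "one_param_of_idempotent D 1 = mat 1" by (simp add: matrix_eq one_param_of_idempotent_apply)
  fix t :: complex assume "t \<noteq> 0"
  then show "invertible (one_param_of_idempotent D t)"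
    unfolding invertible_def using one_param_of_idempotent_mult[OF assms] one
    by (intro exI[of _ "one_param_of_idempotent D (1 / t)"]) simp
next
  fix s t :: complex
  show "one_param_of_idempotent D (s * t) = one_param_of_idempotent D s ** one_param_of_idempotent D t"
    using one_param_of_idempotent_mult[OF assms] by simp
next
  fix a b
  define c where "c m = (if m = 0 then (if a = b then 1 else 0) - D $ a $ b
                         else if m = 1 then D $ a $ b else 0)" for m :: int
  have "{-1..1::int} = {-1, 0, 1}" by auto
  then have "\<forall>t. t \<noteq> 0 \<longrightarrow> one_param_of_idempotent D t $ a $ b = (\<Sum>m\<in>{-1..1}. c m * t powi m)"
    by (simp add: c_def one_param_of_idempotent_def algebra_simps)
  then show "laurent_poly_fun (\<lambda>t. one_param_of_idempotent D t $ a $ b)"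
    unfolding laurent_poly_fun_def by blast
qed

definition nontrivial_fixing_one_param_subgroup ::
  "('g, 'b) monoid_scheme \<Rightarrow> ('g \<Rightarrow> complex^'n^'n) \<Rightarrow> complex^'n \<Rightarrow> (complex \<Rightarrow> complex^'n^'n) \<Rightarrow> bool"
  where "nontrivial_fixing_one_param_subgroup G \<rho> v L \<longleftrightarrow> one_param_subgroup L
           \<and> (\<forall>t. t \<noteq> 0 \<longrightarrow> (\<forall>g\<in>carrier G. L t ** \<rho> g = \<rho> g ** L t))
           \<and> (\<exists>t. t \<noteq> 0 \<and> L t \<noteq> mat 1)
           \<and> (\<forall>t. t \<noteq> 0 \<longrightarrow> L t *v v = v)"

lemma nontrivial_fixing_one_param_subgroup_of_idempotent:
  assumes DD: "D ** D = D" and D: "equivariant_matrix G \<rho> D" and Dv: "D *v v = 0" and D0: "D \<noteq> 0"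
  shows "nontrivial_fixing_one_param_subgroup G \<rho> v (one_param_of_idempotent D)"
  unfolding nontrivial_fixing_one_param_subgroup_def
proof (intro conjI allI impI ballI)
  show "one_param_subgroup (one_param_of_idempotent D)" using one_param_subgroup_of_idempotent[OF DD] .
  fix t :: complex and g assume "g \<in> carrier G"
  then show "one_param_of_idempotent D t ** \<rho> g = \<rho> g ** one_param_of_idempotent D t"
    using equivariant_matrix_apply[OF D]
    by (simp add: matrix_eq matrix_vector_mul_assoc[symmetric] one_param_of_idempotent_apply
        matrix_vector_right_distrib matrix_vector_mult_diff_distrib vec.scale)
next
  obtain x where "D *v x \<noteq> 0" using D0 by (metis matrix_eq matrix_vector_mult_0)
  then have "one_param_of_idempotent D 2 *v x \<noteq> mat 1 *v x" by (simp add: one_param_of_idempotent_apply vec_eq_iff)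
  then show "\<exists>t. t \<noteq> 0 \<and> one_param_of_idempotent D t \<noteq> mat 1" by (intro exI[of _ 2]) auto
next
  fix t :: complex
  show "one_param_of_idempotent D t *v v = v" using Dv by (simp add: one_param_of_idempotent_apply)
qed

lemma equivariant_annihilator_of_nontrivial_fixing_one_param_subgroup:
  assumes "nontrivial_fixing_one_param_subgroup G \<rho> v L"
  shows "\<exists>E. equivariant_matrix G \<rho> E \<and> E *v v = 0 \<and> E \<noteq> 0"
proof -
  obtain t where t: "t \<noteq> 0" "L t \<noteq> mat 1" using assms unfolding nontrivial_fixing_one_param_subgroup_def by blast
  have "equivariant_matrix G \<rho> (L t - mat 1)"
  proof (rule equivariant_matrixI)
    fix g x assume "g \<in> carrier G"
    then have "L t ** \<rho> g = \<rho> g ** L t" using assms t(1) unfolding nontrivial_fixing_one_param_subgroup_def by blast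
    then have "L t *v (\<rho> g *v x) = \<rho> g *v (L t *v x)" by (metis matrix_vector_mul_assoc)
    then show "(L t - mat 1) *v (\<rho> g *v x) = \<rho> g *v ((L t - mat 1) *v x)"
      by (simp add: matrix_vector_mult_diff_rdistrib matrix_vector_mult_diff_distrib)
  qed
  moreover have "(L t - mat 1) *v v = 0"
    using assms t(1) unfolding nontrivial_fixing_one_param_subgroup_def by (simp add: matrix_vector_mult_diff_rdistrib)
  ultimately show ?thesis using t(2) by force
qed

theorem proposition2p7:
  fixes G :: "('g, 'b) monoid_scheme"
    and \<rho> :: "'g \<Rightarrow> complex^'n^'n"
    and v :: "complex^'n"
    and k :: nat and n :: "nat \<Rightarrow> nat"
    and W :: "nat \<Rightarrow> nat \<Rightarrow> (complex^'n) set"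
    and \<phi> :: "nat \<Rightarrow> nat \<Rightarrow> complex^'n \<Rightarrow> complex^'n"
  assumes "representation G \<rho>"
    and "completely_reducible G \<rho>"
    and "isotypic_decomposition G \<rho> k n W \<phi>"
  shows "(vec.span ((\<lambda>g. \<rho> g *v v) ` carrier G) = UNIV
            \<longleftrightarrow> \<not> (\<exists>L. one_param_subgroup L
                     \<and> (\<forall>t. t \<noteq> 0 \<longrightarrow> (\<forall>g\<in>carrier G. L t ** \<rho> g = \<rho> g ** L t))
                     \<and> (\<exists>t. t \<noteq> 0 \<and> L t \<noteq> mat 1)
                     \<and> (\<forall>t. t \<noteq> 0 \<longrightarrow> L t *v v = v)))
       \<and> (\<not> (\<exists>L. one_param_subgroup L
                     \<and> (\<forall>t. t \<noteq> 0 \<longrightarrow> (\<forall>g\<in>carrier G. L t ** \<rho> g = \<rho> g ** L t))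
                     \<and> (\<exists>t. t \<noteq> 0 \<and> L t \<noteq> mat 1)
                     \<and> (\<forall>t. t \<noteq> 0 \<longrightarrow> L t *v v = v))
            \<longleftrightarrow> generic k n W \<phi> v)"
proof -
  interpret isotypic_decomp G \<rho> k n W \<phi> by unfold_locales (rule assms(3))
  have "vec.span ((\<lambda>g. \<rho> g *v v) ` carrier G) = UNIV \<longleftrightarrow> \<not> (\<exists>L. nontrivial_fixing_one_param_subgroup G \<rho> v L)"
    using equivariant_annihilator_eq_0_if_orbit_spans
      idempotent_annihilator_if_orbit_not_spans[OF assms(1,2)]
      equivariant_annihilator_of_nontrivial_fixing_one_param_subgroup nontrivial_fixing_one_param_subgroup_of_idempotent
    by metis
  moreover have "\<not> (\<exists>L. nontrivial_fixing_one_param_subgroup G \<rho> v L) \<longleftrightarrow> generic k n W \<phi> v"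
    using equivariant_annihilator_eq_0_if_generic idempotent_annihilator_if_not_generic
      equivariant_annihilator_of_nontrivial_fixing_one_param_subgroup nontrivial_fixing_one_param_subgroup_of_idempotent
    by metis
  ultimately show ?thesis unfolding nontrivial_fixing_one_param_subgroup_def by (rule conjI)
qed

end
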